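(* Let $S$ be a semidomain. Then $S[x]$ is a GCD-semidomain if and only if $S$ is a GCD-domain (i.e., $S$ is an integral domain and a GCD-semidomain).
   Context: A semidomain is a subset $S$ of an integral domain $R$ containing $0$ and $1$ and closed under addition and multiplication; $S[x]$ is the semidomain of polynomials in $R[x]$ with coefficients in $S$. For a semidomain $T$, $T^*=T\setminus\{0\}$ is a multiplicative monoid. For a nonempty finite subset $F\subseteq T^*$, a greatest common divisor of $F$ is a common divisor $d\in T^*$ of all elements of $F$ (in $T^*$) that is divisible by every common divisor of $F$. $T$ is a GCD-semidomain if every nonempty finite subset of $T^*$ has a greatest common divisor. *)

theory Defs
  imports "HOL-Computational_Algebra.Polynomial"
begin

definition semidomain :: "'a::idom set \<Rightarrow> bool" where
  "semidomain S \<longleftrightarrow> 0 \<in> S \<and> 1 \<in> S \<and>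
     (\<forall>a\<in>S. \<forall>b\<in>S. a + b \<in> S) \<and> (\<forall>a\<in>S. \<forall>b\<in>S. a * b \<in> S)"

definition poly_semidomain :: "'a::idom set \<Rightarrow> 'a poly set" where
  "poly_semidomain S = {p. \<forall>i. coeff p i \<in> S}"

definition sdvd :: "'a::idom set \<Rightarrow> 'a \<Rightarrow> 'a \<Rightarrow> bool" where
  "sdvd T a b \<longleftrightarrow> (\<exists>c\<in>T - {0}. b = a * c)"

definition is_sgcd :: "'a::idom set \<Rightarrow> 'a set \<Rightarrow> 'a \<Rightarrow> bool" where
  "is_sgcd T F d \<longleftrightarrow> d \<in> T - {0} \<and> (\<forall>f\<in>F. sdvd T d f) \<and>
     (\<forall>c\<in>T - {0}. (\<forall>f\<in>F. sdvd T c f) \<longrightarrow> sdvd T c d)"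

definition gcd_semidomain :: "'a::idom set \<Rightarrow> bool" where
  "gcd_semidomain T \<longleftrightarrow>
     (\<forall>F. finite F \<and> F \<noteq> {} \<and> F \<subseteq> T - {0} \<longrightarrow> (\<exists>d. is_sgcd T F d))"

text \<open>A semidomain is an integral domain iff it is closed under additive inverses.\<close>
definition is_domain_sub :: "'a::idom set \<Rightarrow> bool" where
  "is_domain_sub S \<longleftrightarrow> (\<forall>a\<in>S. - a \<in> S)"

end

theory Submission
  imports Defs
begin

text \<open>If S[x] is a GCD-semidomain, then the gcd in S[x] of nonzero constants is a constant, which
  is a gcd in S. Moreover 1 + x + ... + x^5 = (1 + x)(1 + x^2 + x^4) = (1 + x + x^2)(1 + x^3),
  so its gcd with (1 + x)(1 + x + x^2) is the latter up to a unit of S, and the cofactor is a unit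
  multiple of 1 - x + x^2; its coefficient -1 puts -1 into S.

  Gauss's lemma, proved
  by induction on degrees, lets one cancel a primitive factor from a divisibility of all
  coefficients. Pseudo-division yields D = u f + v g in S[x] such that a f and a g are multiples of D
  for some nonzero a \<in> S, i.e. D is a gcd over the fraction field. Then gcd(c(f), c(g)) times the
  primitive part of D is a gcd of f and g in S[x], where c denotes the content.\<close>

lemma semidomainD:
  assumes "semidomain S"
  shows semidomain_0: "0 \<in> S" and semidomain_1: "1 \<in> S"
    and semidomain_add: "a \<in> S \<Longrightarrow> b \<in> S \<Longrightarrow> a + b \<in> S"
    and semidomain_mult: "a \<in> S \<Longrightarrow> b \<in> S \<Longrightarrow> a * b \<in> S"
  using assms unfolding semidomain_def by auto

lemma semidomain_sum: "semidomain S \<Longrightarrow> (\<And>i. i \<in> A \<Longrightarrow> f i \<in> S) \<Longrightarrow> sum f A \<in> S"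
  by (induction A rule: infinite_finite_induct) (auto intro: semidomainD)

lemma semidomain_power: "semidomain S \<Longrightarrow> a \<in> S \<Longrightarrow> a ^ n \<in> S"
  by (induction n) (auto intro: semidomainD)

lemma mem_poly_semidomain_iff: "p \<in> poly_semidomain S \<longleftrightarrow> (\<forall>i. coeff p i \<in> S)"
  by (simp add: poly_semidomain_def)

lemma coeff_mem_poly_semidomain: "p \<in> poly_semidomain S \<Longrightarrow> coeff p i \<in> S"
  by (simp add: poly_semidomain_def)

lemma pCons_mem_poly_semidomain_iff:
  "pCons a p \<in> poly_semidomain S \<longleftrightarrow> a \<in> S \<and> p \<in> poly_semidomain S"
  unfolding mem_poly_semidomain_iff by (metis coeff_pCons_0 coeff_pCons_Suc not0_implies_Suc)

lemma semidomain_poly_semidomain: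
  assumes "semidomain S"
  shows "semidomain (poly_semidomain S)"
  using semidomainD[OF assms]
  unfolding semidomain_def poly_semidomain_def
  by (auto simp: coeff_mult intro!: semidomain_sum[OF assms])

lemma smult_mem_poly_semidomain:
  "semidomain S \<Longrightarrow> a \<in> S \<Longrightarrow> p \<in> poly_semidomain S \<Longrightarrow> smult a p \<in> poly_semidomain S"
  by (simp add: mem_poly_semidomain_iff semidomain_mult)

lemma const_mem_poly_semidomain_iff:
  "semidomain S \<Longrightarrow> [:a:] \<in> poly_semidomain S \<longleftrightarrow> a \<in> S"
  using semidomain_0 semidomain_poly_semidomain
  by (metis pCons_mem_poly_semidomain_iff)

lemma monom_mem_poly_semidomain:
  "semidomain S \<Longrightarrow> a \<in> S \<Longrightarrow> monom a n \<in> poly_semidomain S"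
  by (simp add: mem_poly_semidomain_iff semidomain_0)

lemma sdvd_trans:
  assumes "\<forall>a\<in>T. \<forall>b\<in>T. a * b \<in> T" "sdvd T a b" "sdvd T b c"
  shows "sdvd T a c"
proof -
  from assms obtain x y where "x \<in> T - {0}" "y \<in> T - {0}" "b = a * x" "c = b * y"
    unfolding sdvd_def by auto
  with assms(1) show ?thesis
    unfolding sdvd_def by (auto intro!: bexI[of _ "x * y"] simp: mult.assoc)
qed

lemma gcd_semidomainI_binary:
  fixes T :: "'a::idom set"
  assumes "semidomain T"
    and binary: "\<And>a b. a \<in> T - {0} \<Longrightarrow> b \<in> T - {0} \<Longrightarrow> \<exists>d. is_sgcd T {a, b} d"
  shows "gcd_semidomain T"
  unfolding gcd_semidomain_def
proof (intro allI impI)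
  fix F :: "'a set" assume F: "finite F \<and> F \<noteq> {} \<and> F \<subseteq> T - {0}"
  then have "finite F" "F \<noteq> {}" by auto
  then show "\<exists>d. is_sgcd T F d" using F
  proof (induction F rule: finite_ne_induct)
    case (singleton x)
    then have "is_sgcd T {x} x"
      using semidomain_1[OF \<open>semidomain T\<close>]
      unfolding is_sgcd_def sdvd_def by (auto intro!: bexI[of _ 1])
    then show ?case by blast
  next
    case (insert x F)
    then obtain d' where d': "is_sgcd T F d'" by auto
    then have "d' \<in> T - {0}" "x \<in> T - {0}"
      using insert.prems unfolding is_sgcd_def by auto
    then obtain d where d: "is_sgcd T {d', x} d" using binary by blast
    have "sdvd T d f" if "f \<in> insert x F" for f
      using that d d' sdvd_trans semidomain_mult[OF \<open>semidomain T\<close>]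
      unfolding is_sgcd_def by blast
    moreover have "sdvd T c d" if "c \<in> T - {0}" "\<forall>f\<in>insert x F. sdvd T c f" for c
      using that d d' unfolding is_sgcd_def by auto
    ultimately have "is_sgcd T (insert x F) d"
      using d unfolding is_sgcd_def by blast
    then show ?case by blast
  qed
qed

lemma is_domain_sub_if_gcd_poly_semidomain:
  fixes S :: "'a::idom set"
  assumes S: "semidomain S" and gcd: "gcd_semidomain (poly_semidomain S)"
  shows "is_domain_sub S"
proof -
  let ?T = "poly_semidomain S"
  have T: "semidomain ?T" using S by (rule semidomain_poly_semidomain)
  note mem = pCons_mem_poly_semidomain_iff semidomainD[OF S] semidomain_0[OF T]
  define A B :: "'a poly" where "A = [:1, 1:]" and "B = [:1, 1, 1:]"
  define P Q :: "'a poly" where "P = [:1, 1, 1, 1, 1, 1:]" and "Q = A * B"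
  have AB: "A \<in> ?T - {0}" "B \<in> ?T - {0}" by (simp_all add: A_def B_def mem)
  then have "Q \<in> ?T - {0}" unfolding Q_def using semidomain_mult[OF T] by simp
  moreover have "P \<in> ?T - {0}" by (simp add: P_def mem)
  ultimately have "finite {P, Q}" "{P, Q} \<noteq> {}" "{P, Q} \<subseteq> ?T - {0}" by auto
  then obtain d where d: "is_sgcd ?T {P, Q} d"
    using gcd unfolding gcd_semidomain_def by blast
  have "sdvd ?T A P"
    unfolding sdvd_def by (auto simp: A_def P_def mem intro!: bexI[of _ "[:1, 0, 1, 0, 1:]"])
  moreover have "sdvd ?T B P"
    unfolding sdvd_def by (auto simp: B_def P_def mem intro!: bexI[of _ "[:1, 0, 0, 1:]"])
  moreover have "sdvd ?T A Q" "sdvd ?T B Q"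
    using AB unfolding sdvd_def Q_def by (auto simp: mult.commute)
  ultimately have "sdvd ?T A d" "sdvd ?T B d"
    using d AB unfolding is_sgcd_def by auto
  \<comment> \<open>A and B are coprime: B does not vanish at the root -1 of A.\<close>
  then obtain d1 d2 where "d = A * d1" and d: "d = B * d2"
    unfolding sdvd_def by blast
  then have "poly d (-1) = 0" by (simp add: A_def)
  with d have "poly d2 (-1) = 0" by (simp add: B_def)
  then have "A dvd d2" unfolding A_def using poly_eq_0_iff_dvd[of d2 "-1"] by simp
  then obtain d3 where "d2 = A * d3" by (elim dvdE)
  with d have dQ: "d = Q * d3" by (simp add: Q_def ac_simps)
  have "Q \<noteq> 0" using \<open>Q \<in> ?T - {0}\<close> by simp
  from \<open>is_sgcd ?T {P, Q} d\<close> obtain e where "Q = d * e"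
    unfolding is_sgcd_def sdvd_def by auto
  with dQ \<open>Q \<noteq> 0\<close> have "d3 * e = 1" by (simp add: ac_simps)
  then obtain u v where uv: "d3 = [:u:]" "e = [:v:]" "u * v = 1"
  proof -
    from \<open>d3 * e = 1\<close> obtain u v where "d3 = [:u:]" "e = [:v:]"
      using is_unit_poly_iff by (metis dvd_triv_left dvd_triv_right)
    with \<open>d3 * e = 1\<close> that show thesis by (simp add: one_pCons mult.commute)
  qed
  have "u \<in> S"
    using \<open>is_sgcd ?T {P, Q} d\<close> coeff_mem_poly_semidomain[of d S 0]
    by (simp add: is_sgcd_def dQ uv Q_def A_def B_def)
  from \<open>is_sgcd ?T {P, Q} d\<close> obtain r where r: "P = d * r" "r \<in> ?T"
    unfolding is_sgcd_def sdvd_def by auto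
  have "Q * [:1, -1, 1:] = Q * smult u r"
    using r(1) dQ uv by (simp add: P_def Q_def A_def B_def algebra_simps)
  then have "[:1, -1, 1:] = smult u r" by (simp only: mult_left_cancel[OF \<open>Q \<noteq> 0\<close>])
  then have "r = smult v [:1, -1, 1:]"
    using uv(3) by (simp add: mult.commute)
  then have "- v \<in> S" using coeff_mem_poly_semidomain[OF r(2), of 1] by simp
  then have "- 1 \<in> S" using uv(3) \<open>u \<in> S\<close> semidomain_mult[OF S] by (metis mult_minus_right)
  then show ?thesis
    unfolding is_domain_sub_def using semidomain_mult[OF S] by (metis mult_minus1)
qed

lemma sdvd_const_poly_semidomain_iff:
  assumes S: "semidomain S" and "a \<noteq> 0"
  shows "sdvd (poly_semidomain S) d [:a:] \<longleftrightarrow> (\<exists>d0. d = [:d0:] \<and> sdvd S d0 a)"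
proof
  assume "sdvd (poly_semidomain S) d [:a:]"
  then obtain c where c: "c \<in> poly_semidomain S - {0}" "[:a:] = d * c"
    unfolding sdvd_def by blast
  with \<open>a \<noteq> 0\<close> have "d \<noteq> 0" by auto
  with c have "degree d + degree c = 0" using degree_mult_eq[of d c] by (simp flip: c(2))
  then have "d = [:coeff d 0:]" "c = [:coeff c 0:]" by (simp_all add: degree_0_id)
  moreover have "a = coeff d 0 * coeff c 0"
    using c(2) coeff_mult_0[of d c] by (metis coeff_pCons_0)
  moreover have "coeff c 0 \<in> S - {0}"
    using c(1) \<open>a \<noteq> 0\<close> calculation(3) by (auto simp: coeff_mem_poly_semidomain)
  ultimately show "\<exists>d0. d = [:d0:] \<and> sdvd S d0 a"
    unfolding sdvd_def by blast
next
  assume "\<exists>d0. d = [:d0:] \<and> sdvd S d0 a"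
  then obtain d0 c where "d = [:d0:]" "c \<in> S - {0}" "a = d0 * c"
    unfolding sdvd_def by blast
  then show "sdvd (poly_semidomain S) d [:a:]"
    unfolding sdvd_def using const_mem_poly_semidomain_iff[OF S, of c]
    by (auto intro!: bexI[of _ "[:c:]"])
qed

lemma gcd_semidomain_if_gcd_poly_semidomain:
  fixes S :: "'a::idom set"
  assumes S: "semidomain S" and gcd: "gcd_semidomain (poly_semidomain S)"
  shows "gcd_semidomain S"
  unfolding gcd_semidomain_def
proof (intro allI impI)
  let ?T = "poly_semidomain S"
  fix F assume F: "finite F \<and> F \<noteq> {} \<and> F \<subseteq> S - {0}"
  then have "finite ((\<lambda>a. [:a:]) ` F)" "(\<lambda>a. [:a:]) ` F \<noteq> {}" "(\<lambda>a. [:a:]) ` F \<subseteq> ?T - {0}"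
    using const_mem_poly_semidomain_iff[OF S] by auto
  then obtain d where d: "is_sgcd ?T ((\<lambda>a. [:a:]) ` F) d"
    using gcd unfolding gcd_semidomain_def by blast
  from F obtain a where "a \<in> F" "a \<noteq> 0" by auto
  with d obtain d0 where d0: "d = [:d0:]"
    using sdvd_const_poly_semidomain_iff[OF S] unfolding is_sgcd_def by blast
  note const_dvd_iff = sdvd_const_poly_semidomain_iff[OF S]
  have "[:d0:] \<in> ?T - {0}" using d unfolding d0 is_sgcd_def by blast
  then have "d0 \<in> S - {0}" by (simp add: const_mem_poly_semidomain_iff[OF S])
  moreover have "sdvd S d0 a" if "a \<in> F" for a
  proof -
    have "sdvd ?T [:d0:] [:a:]" using d that unfolding d0 is_sgcd_def by blast
    moreover have "a \<noteq> 0" using F that by blast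
    ultimately show ?thesis using const_dvd_iff by simp
  qed
  moreover have "sdvd S c d0" if c: "c \<in> S - {0}" "\<forall>a\<in>F. sdvd S c a" for c
  proof -
    have "sdvd ?T [:c:] [:a:]" if "a \<in> F" for a
      using c(2) that F const_dvd_iff by blast
    moreover have "[:c:] \<in> ?T - {0}"
      using c(1) by (simp add: const_mem_poly_semidomain_iff[OF S])
    ultimately have "sdvd ?T [:c:] [:d0:]"
      using d unfolding d0 is_sgcd_def by blast
    with \<open>d0 \<in> S - {0}\<close> show ?thesis using const_dvd_iff by simp
  qed
  ultimately have "is_sgcd S F d0" unfolding is_sgcd_def by blast
  then show "\<exists>d. is_sgcd S F d" by blast
qed

locale gcd_subdomain =
  fixes S :: "'a::idom set"
  assumes semidomain: "semidomain S"
    and domain: "is_domain_sub S"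
    and gcd_semidomain: "gcd_semidomain S"
begin

lemma zero_mem: "0 \<in> S" and one_mem: "1 \<in> S"
  and add_mem: "a \<in> S \<Longrightarrow> b \<in> S \<Longrightarrow> a + b \<in> S"
  and mult_mem: "a \<in> S \<Longrightarrow> b \<in> S \<Longrightarrow> a * b \<in> S"
  using semidomainD[OF semidomain] by auto

lemma uminus_mem: "a \<in> S \<Longrightarrow> - a \<in> S"
  using domain unfolding is_domain_sub_def by blast

lemma diff_mem: "a \<in> S \<Longrightarrow> b \<in> S \<Longrightarrow> a - b \<in> S"
  using add_mem[of a "- b"] uminus_mem by simp

definition dvd_S :: "'a \<Rightarrow> 'a \<Rightarrow> bool" (infix \<open>dvd\<^sub>S\<close> 50)
  where "a dvd\<^sub>S b \<longleftrightarrow> (\<exists>c\<in>S. b = a * c)"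

lemma dvd_S_refl [iff]: "a dvd\<^sub>S a"
  unfolding dvd_S_def using one_mem by (auto intro!: bexI[of _ 1])

lemma dvd_S_0 [iff]: "a dvd\<^sub>S 0"
  unfolding dvd_S_def using zero_mem by (auto intro!: bexI[of _ 0])

lemma zero_dvd_S_iff [simp]: "0 dvd\<^sub>S a \<longleftrightarrow> a = 0"
  unfolding dvd_S_def using zero_mem by auto

lemma dvd_S_trans [trans]: "a dvd\<^sub>S b \<Longrightarrow> b dvd\<^sub>S c \<Longrightarrow> a dvd\<^sub>S c"
  unfolding dvd_S_def using mult_mem by (metis mult.assoc)

lemma dvd_S_triv_left: "c \<in> S \<Longrightarrow> a dvd\<^sub>S a * c"
  unfolding dvd_S_def by blast

lemma dvd_S_mult: "a dvd\<^sub>S b \<Longrightarrow> c \<in> S \<Longrightarrow> a dvd\<^sub>S c * b"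
  unfolding dvd_S_def using mult_mem by (metis mult.left_commute)

lemma dvd_S_mult2: "a dvd\<^sub>S b \<Longrightarrow> c \<in> S \<Longrightarrow> a dvd\<^sub>S b * c"
  using dvd_S_mult by (simp add: mult.commute)

lemma dvd_S_mult_left: "a dvd\<^sub>S b \<Longrightarrow> c * a dvd\<^sub>S c * b"
  unfolding dvd_S_def by (auto simp: ac_simps)

lemma dvd_S_mult_cancel_left: "c \<noteq> 0 \<Longrightarrow> c * a dvd\<^sub>S c * b \<Longrightarrow> a dvd\<^sub>S b"
  unfolding dvd_S_def by (auto simp: mult.assoc)

lemma dvd_S_diff: "a dvd\<^sub>S b \<Longrightarrow> a dvd\<^sub>S c \<Longrightarrow> a dvd\<^sub>S b - c"
  unfolding dvd_S_def using diff_mem by (metis right_diff_distrib)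

lemma sdvd_iff_dvd_S: "b \<noteq> 0 \<Longrightarrow> sdvd S a b \<longleftrightarrow> a dvd\<^sub>S b"
  unfolding sdvd_def dvd_S_def by auto

text \<open>Zeros are discarded before taking the gcd; Gcd_S A = 0 exactly when A \<subseteq> {0}.\<close>

definition Gcd_S :: "'a set \<Rightarrow> 'a"
  where "Gcd_S A = (if A - {0} = {} then 0 else SOME d. is_sgcd S (A - {0}) d)"

lemma Gcd_S_is_gcd:
  assumes "finite A" "A \<subseteq> S"
  shows "Gcd_S A \<in> S \<and> (\<forall>a\<in>A. Gcd_S A dvd\<^sub>S a) \<and>
    (\<forall>c\<in>S. (\<forall>a\<in>A. c dvd\<^sub>S a) \<longrightarrow> c dvd\<^sub>S Gcd_S A)"
proof (cases "A - {0} = {}")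
  case True
  then have "Gcd_S A = 0" "A \<subseteq> {0}" by (auto simp: Gcd_S_def)
  then show ?thesis using zero_mem by auto
next
  case False
  with assms have "finite (A - {0})" "A - {0} \<noteq> {}" "A - {0} \<subseteq> S - {0}" by auto
  then have "\<exists>d. is_sgcd S (A - {0}) d"
    using gcd_semidomain unfolding gcd_semidomain_def by blast
  with False have d: "is_sgcd S (A - {0}) (Gcd_S A)"
    unfolding Gcd_S_def by (simp add: someI_ex)
  have "Gcd_S A dvd\<^sub>S a" if "a \<in> A" for a
  proof (cases "a = 0")
    case False
    with d that show ?thesis using sdvd_iff_dvd_S unfolding is_sgcd_def by blast
  qed simp
  moreover have "c dvd\<^sub>S Gcd_S A" if "c \<in> S" "\<forall>a\<in>A. c dvd\<^sub>S a" for c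
  proof -
    from False obtain a where "a \<in> A" "a \<noteq> 0" by blast
    with that have "c \<noteq> 0" by auto
    with that have "\<forall>a\<in>A - {0}. sdvd S c a" using sdvd_iff_dvd_S by blast
    with \<open>c \<in> S\<close> \<open>c \<noteq> 0\<close> d have "sdvd S c (Gcd_S A)"
      unfolding is_sgcd_def by blast
    with d show ?thesis using sdvd_iff_dvd_S unfolding is_sgcd_def by blast
  qed
  ultimately show ?thesis using d unfolding is_sgcd_def by blast
qed

lemma Gcd_S_mem: "finite A \<Longrightarrow> A \<subseteq> S \<Longrightarrow> Gcd_S A \<in> S"
  and Gcd_S_dvd: "finite A \<Longrightarrow> A \<subseteq> S \<Longrightarrow> a \<in> A \<Longrightarrow> Gcd_S A dvd\<^sub>S a"
  and Gcd_S_greatest: "finite A \<Longrightarrow> A \<subseteq> S \<Longrightarrow> c \<in> S \<Longrightarrow> (\<And>a. a \<in> A \<Longrightarrow> c dvd\<^sub>S a)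
    \<Longrightarrow> c dvd\<^sub>S Gcd_S A"
  using Gcd_S_is_gcd by blast+

lemma Gcd_S_pair_mult:
  assumes "k \<in> S" "a \<in> S" "b \<in> S"
  shows "Gcd_S {k * a, k * b} dvd\<^sub>S k * Gcd_S {a, b}"
proof (cases "k = 0")
  case False
  let ?e = "Gcd_S {k * a, k * b}"
  have ka: "{k * a, k * b} \<subseteq> S" using assms by (simp add: mult_mem)
  have "k dvd\<^sub>S ?e"
    by (rule Gcd_S_greatest[OF _ ka assms(1)]) (use assms dvd_S_triv_left in auto)
  then obtain e where e: "e \<in> S" "?e = k * e" unfolding dvd_S_def by blast
  have "?e dvd\<^sub>S k * a" "?e dvd\<^sub>S k * b" using ka by (simp_all add: Gcd_S_dvd)
  with False e(2) have "e dvd\<^sub>S a" "e dvd\<^sub>S b" by (simp_all add: dvd_S_mult_cancel_left)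
  with assms e(1) have "e dvd\<^sub>S Gcd_S {a, b}" by (intro Gcd_S_greatest) auto
  with e(2) show ?thesis by (simp add: dvd_S_mult_left)
qed simp

lemma coprime_dvd_S_mult:
  assumes "d \<in> S" "a \<in> S" "b \<in> S" "Gcd_S {d, a} dvd\<^sub>S 1" "d dvd\<^sub>S a * b"
  shows "d dvd\<^sub>S b"
proof -
  have "d dvd\<^sub>S b * d" using assms(3) by (rule dvd_S_mult[OF dvd_S_refl])
  moreover have "d dvd\<^sub>S b * a" using assms(5) by (simp add: mult.commute)
  ultimately have "d dvd\<^sub>S Gcd_S {b * d, b * a}"
    using assms(1-3) by (intro Gcd_S_greatest) (auto intro: mult_mem)
  also have "\<dots> dvd\<^sub>S b * Gcd_S {d, a}" by (rule Gcd_S_pair_mult[OF assms(3,1,2)])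
  also have "\<dots> dvd\<^sub>S b * 1" using assms(4) by (rule dvd_S_mult_left)
  finally show ?thesis by simp
qed

abbreviation Sx :: "'a poly set"
  where "Sx \<equiv> poly_semidomain S"

lemma Sx_semidomain: "semidomain Sx"
  using semidomain by (rule semidomain_poly_semidomain)

lemmas zero_mem_Sx = semidomain_0[OF Sx_semidomain]
  and one_mem_Sx = semidomain_1[OF Sx_semidomain]
  and add_mem_Sx = semidomain_add[OF Sx_semidomain]
  and mult_mem_Sx = semidomain_mult[OF Sx_semidomain]
  and smult_mem_Sx = smult_mem_poly_semidomain[OF semidomain]

lemma diff_mem_Sx: "p \<in> Sx \<Longrightarrow> q \<in> Sx \<Longrightarrow> p - q \<in> Sx"
  by (simp add: mem_poly_semidomain_iff diff_mem)

definition dvd_coeffs :: "'a \<Rightarrow> 'a poly \<Rightarrow> bool"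
  where "dvd_coeffs k p \<longleftrightarrow> (\<forall>i. k dvd\<^sub>S coeff p i)"

definition coprime_coeffs :: "'a \<Rightarrow> 'a poly \<Rightarrow> bool"
  where "coprime_coeffs d p \<longleftrightarrow> (\<forall>e\<in>S. e dvd\<^sub>S d \<longrightarrow> dvd_coeffs e p \<longrightarrow> e dvd\<^sub>S 1)"

definition primitive :: "'a poly \<Rightarrow> bool"
  where "primitive p \<longleftrightarrow> (\<forall>c\<in>S. dvd_coeffs c p \<longrightarrow> c dvd\<^sub>S 1)"

lemma dvd_coeffs_0 [simp]: "dvd_coeffs k 0"
  by (simp add: dvd_coeffs_def)

lemma dvd_coeffs_pCons [simp]: "dvd_coeffs k (pCons a p) \<longleftrightarrow> k dvd\<^sub>S a \<and> dvd_coeffs k p"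
  unfolding dvd_coeffs_def by (auto simp: coeff_pCons split: nat.splits)

lemma zero_dvd_coeffs_iff [simp]: "dvd_coeffs 0 p \<longleftrightarrow> p = 0"
  by (auto simp: dvd_coeffs_def poly_eq_iff)

lemma dvd_coeffs_trans: "k dvd\<^sub>S l \<Longrightarrow> dvd_coeffs l p \<Longrightarrow> dvd_coeffs k p"
  unfolding dvd_coeffs_def using dvd_S_trans by blast

lemma dvd_coeffs_smult: "p \<in> Sx \<Longrightarrow> k dvd\<^sub>S c \<Longrightarrow> dvd_coeffs k (smult c p)"
  unfolding dvd_coeffs_def by (simp add: dvd_S_mult2 coeff_mem_poly_semidomain)

lemma dvd_coeffs_smult_mult: "dvd_coeffs k p \<Longrightarrow> dvd_coeffs (m * k) (smult m p)"
  unfolding dvd_coeffs_def by (simp add: dvd_S_mult_left)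

lemma dvd_coeffs_smult_cancel: "m \<noteq> 0 \<Longrightarrow> dvd_coeffs (m * k) (smult m p) \<Longrightarrow> dvd_coeffs k p"
  unfolding dvd_coeffs_def using dvd_S_mult_cancel_left by simp

lemma dvd_coeffsE:
  assumes "h \<in> Sx" "dvd_coeffs k h"
  obtains h' where "h' \<in> Sx" "h = smult k h'"
proof -
  from assms have "\<exists>h'\<in>Sx. h = smult k h'"
  proof (induction h)
    case 0
    then show ?case using zero_mem_Sx by (auto intro!: bexI[of _ 0])
  next
    case (pCons a p)
    then obtain c p' where "c \<in> S" "a = k * c" "p' \<in> Sx" "p = smult k p'"
      by (auto simp: pCons_mem_poly_semidomain_iff dvd_S_def)
    then show ?case by (auto simp: pCons_mem_poly_semidomain_iff intro!: bexI[of _ "pCons c p'"])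
  qed
  with that show thesis by blast
qed

lemma dvd_coeffs_mult:
  assumes "p \<in> Sx" "q \<in> Sx" "dvd_coeffs k p"
  shows "dvd_coeffs k (p * q)"
proof -
  obtain p' where "p' \<in> Sx" "p = smult k p'" using dvd_coeffsE[OF assms(1,3)] .
  with assms(2) show ?thesis by (simp add: dvd_coeffs_smult mult_mem_Sx)
qed

definition content_S :: "'a poly \<Rightarrow> 'a"
  where "content_S p = Gcd_S (range (coeff p))"

lemma finite_range_coeff: "finite (range (coeff p))"
  by (simp add: range_coeff)

lemma range_coeff_subset: "p \<in> Sx \<Longrightarrow> range (coeff p) \<subseteq> S"
  by (auto simp: coeff_mem_poly_semidomain)

lemma content_S_mem: "p \<in> Sx \<Longrightarrow> content_S p \<in> S"
  unfolding content_S_def by (intro Gcd_S_mem finite_range_coeff range_coeff_subset)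

lemma content_S_dvd_coeffs: "p \<in> Sx \<Longrightarrow> dvd_coeffs (content_S p) p"
  unfolding content_S_def dvd_coeffs_def
  using Gcd_S_dvd[OF finite_range_coeff range_coeff_subset] by blast

lemma dvd_content_S: "p \<in> Sx \<Longrightarrow> k \<in> S \<Longrightarrow> dvd_coeffs k p \<Longrightarrow> k dvd\<^sub>S content_S p"
  unfolding content_S_def dvd_coeffs_def
  using Gcd_S_greatest[OF finite_range_coeff range_coeff_subset] by blast

lemma content_S_eq_0_iff: "p \<in> Sx \<Longrightarrow> content_S p = 0 \<longleftrightarrow> p = 0"
  using content_S_dvd_coeffs zero_dvd_coeffs_iff dvd_content_S zero_mem by fastforce

lemma primitive_1: "primitive 1"
  by (simp add: primitive_def one_pCons)

lemma primitive_nonzero: "primitive p \<Longrightarrow> p \<noteq> 0"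
  unfolding primitive_def using zero_mem by force

lemma primitive_part:
  assumes "h \<in> Sx"
  obtains hs where "hs \<in> Sx" "primitive hs" "h = smult (content_S h) hs"
proof (cases "h = 0")
  case True
  then show ?thesis
    using that[OF one_mem_Sx primitive_1] assms by (simp add: content_S_eq_0_iff)
next
  case False
  let ?c = "content_S h"
  have "?c \<noteq> 0" using False assms by (simp add: content_S_eq_0_iff)
  obtain hs where hs: "hs \<in> Sx" "h = smult ?c hs"
    using dvd_coeffsE[OF assms content_S_dvd_coeffs[OF assms]] .
  have "b dvd\<^sub>S 1" if "b \<in> S" "dvd_coeffs b hs" for b
  proof -
    have "dvd_coeffs (?c * b) h"
      using dvd_coeffs_smult_mult[OF that(2)] hs(2) by metis
    then have "?c * b dvd\<^sub>S ?c * 1"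
      using assms that(1) by (simp add: dvd_content_S content_S_mem mult_mem)
    with \<open>?c \<noteq> 0\<close> show ?thesis by (rule dvd_S_mult_cancel_left)
  qed
  with hs that show thesis unfolding primitive_def by blast
qed

lemma coprime_coeffs_dvd: "t dvd\<^sub>S d \<Longrightarrow> coprime_coeffs d p \<Longrightarrow> coprime_coeffs t p"
  unfolding coprime_coeffs_def using dvd_S_trans by blast

lemma coprime_coeffs_pCons_tail:
  assumes "coprime_coeffs d (pCons a p)" "t dvd\<^sub>S d" "t dvd\<^sub>S a"
  shows "coprime_coeffs t p"
  using assms dvd_S_trans unfolding coprime_coeffs_def by auto

lemma dvd_coeffs_pCons_mult_tail:
  assumes "dvd_coeffs t (pCons a p * q)" "t dvd\<^sub>S a" "q \<in> Sx"
  shows "dvd_coeffs t (p * q)"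
  unfolding dvd_coeffs_def
proof
  fix i
  have "coeff (p * q) i = coeff (pCons a p * q) (Suc i) - a * coeff q (Suc i)"
    by simp
  moreover have "t dvd\<^sub>S a * coeff q (Suc i)"
    using assms(2,3) by (simp add: dvd_S_mult2 coeff_mem_poly_semidomain)
  moreover have "t dvd\<^sub>S coeff (pCons a p * q) (Suc i)"
    using assms(1) unfolding dvd_coeffs_def by blast
  ultimately show "t dvd\<^sub>S coeff (p * q) i"
    by (simp only: dvd_S_diff)
qed

text \<open>The core of Gauss's lemma. Writing f = a + x f' and g = b + x g', induction first shows
  that gcd(d, a) is a unit; since d divides a b, it then divides b, and induction applies to g' f.\<close>

lemma coprime_coeffs_mult:
  assumes "f \<in> Sx" "g \<in> Sx" "d \<in> S" "coprime_coeffs d f" "coprime_coeffs d g"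
    and "dvd_coeffs d (f * g)"
  shows "d dvd\<^sub>S 1"
  using assms
proof (induction "degree f + degree g" arbitrary: f g d rule: less_induct)
  case less
  obtain a f' where f: "f = pCons a f'" by (cases f)
  obtain b g' where g: "g = pCons b g'" by (cases g)
  have mem: "a \<in> S" "f' \<in> Sx" "b \<in> S" "g' \<in> Sx"
    using less.prems(1,2) f g by (simp_all add: pCons_mem_poly_semidomain_iff)
  define t where "t = Gcd_S {d, a}"
  have t: "t \<in> S" "t dvd\<^sub>S d" "t dvd\<^sub>S a"
    using less.prems(3) mem(1) unfolding t_def by (simp_all add: Gcd_S_mem Gcd_S_dvd)
  have "t dvd\<^sub>S 1"
  proof (cases "f' = 0")
    case True
    with f t have "dvd_coeffs t f" by simp
    with less.prems(4) t show ?thesis unfolding coprime_coeffs_def by blast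
  next
    case False
    then have "degree f' + degree g < degree f + degree g" using f by simp
    moreover have "coprime_coeffs t f'"
      using coprime_coeffs_pCons_tail less.prems(4) f t by blast
    moreover have "coprime_coeffs t g"
      using coprime_coeffs_dvd less.prems(5) t by blast
    moreover have "dvd_coeffs t (f' * g)"
      using dvd_coeffs_pCons_mult_tail dvd_coeffs_trans less.prems(2,6) f t by blast
    ultimately show ?thesis using less.hyps mem(2) less.prems(2) t(1) by blast
  qed
  moreover have "d dvd\<^sub>S a * b"
    using less.prems(6) f g unfolding dvd_coeffs_def by (metis coeff_mult_0 coeff_pCons_0)
  ultimately have "d dvd\<^sub>S b"
    using coprime_dvd_S_mult less.prems(3) mem(1,3) unfolding t_def by blast
  show ?case
  proof (cases "g' = 0")
    case True
    with g \<open>d dvd\<^sub>S b\<close> have "dvd_coeffs d g" by simp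
    with less.prems(3,5) show ?thesis unfolding coprime_coeffs_def by blast
  next
    case False
    then have "degree g' + degree f < degree f + degree g" using g by simp
    moreover have "coprime_coeffs d g'"
      using coprime_coeffs_pCons_tail less.prems(5) g \<open>d dvd\<^sub>S b\<close> by blast
    moreover have "dvd_coeffs d (g' * f)"
      using dvd_coeffs_pCons_mult_tail[of d b g' f] less.prems(1,6) g \<open>d dvd\<^sub>S b\<close>
      by (simp only: mult.commute)
    ultimately show ?thesis using less.hyps mem(4) less.prems(1,3,4) by blast
  qed
qed

lemma dvd_coeffs_primitive_mult:
  assumes "p \<in> Sx" "primitive p" "h \<in> Sx" "k \<in> S" "dvd_coeffs k (p * h)"
  shows "dvd_coeffs k h"
proof (cases "k = 0")
  case True
  with assms(2,5) show ?thesis by (simp add: primitive_nonzero)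
next
  case False
  let ?c = "content_S h"
  obtain hs where hs: "hs \<in> Sx" "h = smult ?c hs"
    using primitive_part[OF assms(3)] by metis
  define m where "m = Gcd_S {k, ?c}"
  have "m \<in> S" "m dvd\<^sub>S k" "m dvd\<^sub>S ?c"
    using assms(3,4) by (simp_all add: m_def Gcd_S_mem Gcd_S_dvd content_S_mem)
  then obtain k' c' where k': "k' \<in> S" "k = m * k'" and c': "c' \<in> S" "?c = m * c'"
    unfolding dvd_S_def by blast
  with False have "m \<noteq> 0" by auto
  define h' where "h' = smult c' hs"
  have h': "h' \<in> Sx" "h = smult m h'"
    using hs c' by (simp_all add: h'_def smult_mem_Sx)
  have "dvd_coeffs k' (p * h')"
    using assms(5) k'(2) h'(2) \<open>m \<noteq> 0\<close> by (simp add: dvd_coeffs_smult_cancel)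
  moreover have "coprime_coeffs k' h'"
    unfolding coprime_coeffs_def
  proof (intro ballI impI)
    fix e assume e: "e \<in> S" "e dvd\<^sub>S k'" "dvd_coeffs e h'"
    have "dvd_coeffs (m * e) h"
      using dvd_coeffs_smult_mult[OF e(3)] h'(2) by simp
    then have "m * e dvd\<^sub>S ?c"
      using assms(3) \<open>m \<in> S\<close> e(1) by (simp add: dvd_content_S mult_mem)
    moreover have "m * e dvd\<^sub>S k" using e(2) k'(2) by (simp add: dvd_S_mult_left)
    ultimately have "m * e dvd\<^sub>S m"
      using assms(3,4) e(1) \<open>m \<in> S\<close> unfolding m_def
      by (intro Gcd_S_greatest) (auto simp: content_S_mem mult_mem)
    then have "m * e dvd\<^sub>S m * 1" by simp
    with \<open>m \<noteq> 0\<close> show "e dvd\<^sub>S 1" by (rule dvd_S_mult_cancel_left)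
  qed
  moreover have "coprime_coeffs k' p"
    using assms(2) unfolding coprime_coeffs_def primitive_def by blast
  ultimately have "k' dvd\<^sub>S 1"
    using coprime_coeffs_mult[OF assms(1) h'(1) k'(1)] by blast
  then have "k dvd\<^sub>S m" using k'(2) by (metis dvd_S_mult_left mult_1_right)
  moreover have "dvd_coeffs m h" using h' by (simp add: dvd_coeffs_smult)
  ultimately show ?thesis by (rule dvd_coeffs_trans)
qed

lemma primitive_dvd_if_dvd_smult:
  assumes "p \<in> Sx" "primitive p" "a \<in> S" "a \<noteq> 0" "h \<in> Sx" "q \<in> Sx"
    and "smult a h = p * q"
  obtains r where "r \<in> Sx" "h = p * r"
proof -
  have "dvd_coeffs a (p * q)"
    using dvd_coeffs_smult[OF assms(5) dvd_S_refl, of a] assms(7) by simp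
  then have "dvd_coeffs a q"
    by (rule dvd_coeffs_primitive_mult[OF assms(1,2,6,3)])
  then obtain r where r: "r \<in> Sx" "q = smult a r"
    using assms(6) dvd_coeffsE by blast
  with assms(7) have "smult a h = smult a (p * r)" by simp
  with assms(4) have "h = p * r" by (rule smult_cancel)
  with r(1) that show thesis by blast
qed

lemma pseudo_division:
  assumes "g \<in> Sx" "g \<noteq> 0" "f \<in> Sx"
  shows "\<exists>k. \<exists>q\<in>Sx. \<exists>r\<in>Sx. smult (lead_coeff g ^ k) f = q * g + r \<and> (r = 0 \<or> degree r < degree g)"
  using assms(3)
proof (induction "degree f" arbitrary: f rule: less_induct)
  case less
  let ?l = "lead_coeff g"
  have l: "?l \<in> S" using assms(1) by (rule coeff_mem_poly_semidomain)
  show ?case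
  proof (cases "f = 0 \<or> degree f < degree g")
    case True
    with less.prems zero_mem_Sx show ?thesis
      by (intro exI[of _ 0] bexI[of _ 0] bexI[of _ f]) auto
  next
    case False
    then have "f \<noteq> 0" and deg: "degree g \<le> degree f" by auto
    define M where "M = monom (lead_coeff f) (degree f - degree g)"
    define f1 where "f1 = smult ?l f - M * g"
    have M: "M \<in> Sx"
      unfolding M_def by (intro monom_mem_poly_semidomain semidomain coeff_mem_poly_semidomain less.prems)
    have f1: "f1 \<in> Sx"
      unfolding f1_def by (intro diff_mem_Sx smult_mem_Sx mult_mem_Sx l M assms(1) less.prems)
    have "degree (M * g) \<le> degree f"
      using degree_mult_le[of M g] degree_monom_le[of "lead_coeff f" "degree f - degree g"] deg
      unfolding M_def by linarith
    then have "degree f1 \<le> degree f"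
      unfolding f1_def by (meson degree_diff_le degree_smult_le)
    moreover have "coeff f1 (degree f) = 0"
    proof -
      have "coeff (M * g) (degree f) = lead_coeff f * ?l"
        using deg unfolding M_def by (simp add: coeff_monom_mult)
      then show ?thesis unfolding f1_def by (simp add: mult.commute)
    qed
    ultimately have "f1 = 0 \<or> degree f1 < degree f"
      by (metis le_neq_implies_less leading_coeff_0_iff)
    then obtain k q r where qr: "q \<in> Sx" "r \<in> Sx" "smult (?l ^ k) f1 = q * g + r"
      "r = 0 \<or> degree r < degree g"
      using less.hyps[OF _ f1] zero_mem_Sx by (metis add_0 mult_zero_left smult_0_right)
    have "smult (?l ^ Suc k) f = smult (?l ^ k) (f1 + M * g)"
      unfolding f1_def by (simp add: mult.commute)
    also have "\<dots> = smult (?l ^ k) f1 + smult (?l ^ k) M * g"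
      by (simp add: smult_add_right)
    also have "\<dots> = (q + smult (?l ^ k) M) * g + r"
      using qr(3) by (simp add: algebra_simps)
    finally have "smult (?l ^ Suc k) f = (q + smult (?l ^ k) M) * g + r" .
    moreover have "q + smult (?l ^ k) M \<in> Sx"
      by (intro add_mem_Sx smult_mem_Sx semidomain_power[OF semidomain] qr l M)
    ultimately show ?thesis using qr(2,4) by blast
  qed
qed

text \<open>D is a gcd of f and g over the fraction field of S which is an S[x]-combination of f and g.\<close>

definition bezout_gcd :: "'a poly \<Rightarrow> 'a poly \<Rightarrow> 'a poly \<Rightarrow> bool"
  where "bezout_gcd f g D \<longleftrightarrow> D \<in> Sx \<and> D \<noteq> 0 \<and> (\<exists>u\<in>Sx. \<exists>v\<in>Sx. u * f + v * g = D) \<and>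
    (\<exists>a\<in>S - {0}. \<exists>f'\<in>Sx. \<exists>g'\<in>Sx. smult a f = D * f' \<and> smult a g = D * g')"

lemma bezout_gcd_0: "f \<in> Sx \<Longrightarrow> f \<noteq> 0 \<Longrightarrow> bezout_gcd f 0 f"
  unfolding bezout_gcd_def using zero_mem_Sx one_mem_Sx one_mem
  by (intro conjI bexI[of _ 1] bexI[of _ 0]) auto

lemma bezout_gcd_pseudo_remainder:
  assumes "bezout_gcd g r D" "l \<in> S" "l \<noteq> 0" "q \<in> Sx" "smult l f = q * g + r"
  shows "bezout_gcd f g D"
proof -
  from assms(1) obtain u v a g1 r1 where D: "D \<in> Sx" "D \<noteq> 0" and uv: "u \<in> Sx" "v \<in> Sx"
    "u * g + v * r = D" and a: "a \<in> S" "a \<noteq> 0" and g1: "g1 \<in> Sx" "r1 \<in> Sx"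
    "smult a g = D * g1" "smult a r = D * r1"
    unfolding bezout_gcd_def by blast
  have "smult (a * l) f = smult a (q * g + r)"
    using assms(5) by (simp flip: smult_smult)
  also have "\<dots> = q * smult a g + smult a r"
    by (simp add: smult_add_right)
  also have "\<dots> = D * (q * g1 + r1)"
    using g1(3,4) by (simp add: algebra_simps)
  finally have f: "smult (a * l) f = D * (q * g1 + r1)" .
  have g: "smult (a * l) g = D * smult l g1"
    using g1(3) by (metis mult.commute mult_smult_right smult_smult)
  have "smult l v * f + (u - v * q) * g = v * smult l f + u * g - v * q * g"
    by (simp add: algebra_simps)
  also have "\<dots> = D"
    using assms(5) uv(3) by (simp add: algebra_simps)
  finally have uv': "smult l v * f + (u - v * q) * g = D" .
  have "smult l v \<in> Sx" "u - v * q \<in> Sx" "q * g1 + r1 \<in> Sx" "smult l g1 \<in> Sx" "a * l \<in> S - {0}"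
    using assms(2-4) uv(1,2) g1(1,2) a
    by (simp_all add: smult_mem_Sx diff_mem_Sx mult_mem_Sx add_mem_Sx mult_mem)
  with D f g uv' show ?thesis
    unfolding bezout_gcd_def by blast
qed

lemma bezout_gcd_exists:
  assumes "f \<in> Sx" "f \<noteq> 0" "g \<in> Sx"
  shows "\<exists>D. bezout_gcd f g D"
  using assms
proof (induction "degree g" arbitrary: f g rule: less_induct)
  case less
  show ?case
  proof (cases "g = 0")
    case True
    with less.prems show ?thesis using bezout_gcd_0 by blast
  next
    case False
    then obtain k q r where qr: "q \<in> Sx" "r \<in> Sx"
      "smult (lead_coeff g ^ k) f = q * g + r" "r = 0 \<or> degree r < degree g"
      using pseudo_division[OF less.prems(3) _ less.prems(1)] by blast
    have "lead_coeff g ^ k \<in> S" "lead_coeff g ^ k \<noteq> 0"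
      using less.prems(3) False
      by (simp_all add: semidomain_power[OF semidomain] coeff_mem_poly_semidomain)
    moreover have "\<exists>D. bezout_gcd g r D"
      using less.hyps[OF _ less.prems(3) False qr(2)] bezout_gcd_0[OF less.prems(3) False] qr(4)
      by blast
    ultimately show ?thesis
      using bezout_gcd_pseudo_remainder qr(1,3) by blast
  qed
qed

lemma is_sgcd_Sx_pair:
  assumes f: "f \<in> Sx" "f \<noteq> 0" and g: "g \<in> Sx" "g \<noteq> 0"
  shows "\<exists>G. is_sgcd Sx {f, g} G"
proof -
  obtain D where "bezout_gcd f g D" using bezout_gcd_exists f g(1) by blast
  then obtain u v a f' g' where D: "D \<in> Sx" "D \<noteq> 0" and uv: "u \<in> Sx" "v \<in> Sx" "u * f + v * g = D"
    and a: "a \<in> S" "a \<noteq> 0" and fg': "f' \<in> Sx" "g' \<in> Sx" "smult a f = D * f'" "smult a g = D * g'"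
    unfolding bezout_gcd_def by blast
  obtain Ds where Ds: "Ds \<in> Sx" "primitive Ds" "D = smult (content_S D) Ds"
    using primitive_part[OF D(1)] by blast
  have cD: "content_S D \<in> S" "content_S D \<noteq> 0"
    using D by (simp_all add: content_S_mem content_S_eq_0_iff)
  define \<gamma> where "\<gamma> = Gcd_S {content_S f, content_S g}"
  have \<gamma>: "\<gamma> \<in> S" "\<gamma> dvd\<^sub>S content_S f" "\<gamma> dvd\<^sub>S content_S g"
    using f(1) g(1) unfolding \<gamma>_def by (simp_all add: Gcd_S_mem Gcd_S_dvd content_S_mem)
  have "\<gamma> \<noteq> 0" using \<gamma>(2) f by (auto simp: content_S_eq_0_iff)
  define G where "G = smult \<gamma> Ds"
  have G: "G \<in> Sx" "G \<noteq> 0"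
    using \<gamma>(1) \<open>\<gamma> \<noteq> 0\<close> Ds(1,2) by (simp_all add: G_def smult_mem_Sx primitive_nonzero)
  have G_dvd: "sdvd Sx G h"
    if h: "h \<in> Sx" "h \<noteq> 0" "h' \<in> Sx" "smult a h = D * h'" "\<gamma> dvd\<^sub>S content_S h" for h h'
  proof -
    have "smult a h = Ds * smult (content_S D) h'"
      using h(4) Ds(3) by (metis mult_smult_left mult_smult_right)
    then obtain h1 where h1: "h1 \<in> Sx" "h = Ds * h1"
      using primitive_dvd_if_dvd_smult[OF Ds(1,2) a h(1)] smult_mem_Sx[OF cD(1) h(3)] by blast
    have "dvd_coeffs \<gamma> (Ds * h1)"
      using dvd_coeffs_trans[OF h(5) content_S_dvd_coeffs[OF h(1)]] h1(2) by simp
    then have "dvd_coeffs \<gamma> h1"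
      by (rule dvd_coeffs_primitive_mult[OF Ds(1,2) h1(1) \<gamma>(1)])
    then obtain h2 where "h2 \<in> Sx" "h1 = smult \<gamma> h2"
      using h1(1) dvd_coeffsE by blast
    with h(2) h1(2) show ?thesis
      unfolding sdvd_def G_def by (auto simp: mult.commute)
  qed
  have "sdvd Sx G f" "sdvd Sx G g"
    using G_dvd f g fg' \<gamma>(2,3) by blast+
  moreover have "sdvd Sx c G" if c: "c \<in> Sx - {0}" "sdvd Sx c f" "sdvd Sx c g" for c
  proof -
    obtain m1 m2 where m: "m1 \<in> Sx" "f = c * m1" "m2 \<in> Sx" "g = c * m2"
      using c unfolding sdvd_def by blast
    obtain cs where cs: "cs \<in> Sx" "primitive cs" "c = smult (content_S c) cs"
      using primitive_part c(1) by blast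
    let ?k = "content_S c"
    have k: "?k \<in> S" using c(1) by (simp add: content_S_mem)
    \<comment> \<open>From D = c (u m1 + v m2), the primitive part of c divides D, hence Ds.\<close>
    have "D = c * (u * m1 + v * m2)"
      using uv(3) m(2,4) by (simp add: algebra_simps)
    also have "\<dots> = cs * smult ?k (u * m1 + v * m2)"
      using cs(3) by (metis mult_smult_left mult_smult_right)
    finally have "smult (content_S D) Ds = cs * smult ?k (u * m1 + v * m2)"
      using Ds(3) by simp
    then obtain H where H: "H \<in> Sx" "Ds = cs * H"
      using primitive_dvd_if_dvd_smult[OF cs(1,2) cD Ds(1)] k m(1,3) uv(1,2)
      by (metis add_mem_Sx mult_mem_Sx smult_mem_Sx)
    have "dvd_coeffs ?k f" "dvd_coeffs ?k g"
      using m c(1) by (simp_all add: dvd_coeffs_mult content_S_dvd_coeffs)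
    then have "?k dvd\<^sub>S \<gamma>"
      unfolding \<gamma>_def using f(1) g(1) k
      by (intro Gcd_S_greatest) (auto simp: content_S_mem dvd_content_S)
    then obtain k' where k': "k' \<in> S" "\<gamma> = ?k * k'" unfolding dvd_S_def by blast
    have "G = smult k' (smult ?k cs * H)"
      unfolding G_def using k'(2) H(2) by (simp add: ac_simps)
    also have "\<dots> = c * smult k' H"
      using cs(3) by simp
    finally have "G = c * smult k' H" .
    moreover have "smult k' H \<in> Sx" using k'(1) H(1) by (rule smult_mem_Sx)
    ultimately show ?thesis unfolding sdvd_def using G(2) by (metis DiffI mult_zero_right singletonD)
  qed
  ultimately have "is_sgcd Sx {f, g} G" unfolding is_sgcd_def using G by auto
  then show ?thesis by blast
qed

lemma gcd_semidomain_Sx: "gcd_semidomain Sx"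
  by (rule gcd_semidomainI_binary[OF Sx_semidomain]) (simp add: is_sgcd_Sx_pair)

end

theorem proposition5p4:
  fixes S :: "'a::idom set"
  assumes "semidomain S"
  shows "gcd_semidomain (poly_semidomain S) \<longleftrightarrow> is_domain_sub S \<and> gcd_semidomain S"
proof
  assume "gcd_semidomain (poly_semidomain S)"
  with assms show "is_domain_sub S \<and> gcd_semidomain S"
    by (simp add: is_domain_sub_if_gcd_poly_semidomain gcd_semidomain_if_gcd_poly_semidomain)
next
  assume "is_domain_sub S \<and> gcd_semidomain S"
  with assms interpret gcd_subdomain S by unfold_locales auto
  show "gcd_semidomain (poly_semidomain S)" by (rule gcd_semidomain_Sx)
qed

end
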